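(* For every $n\ge3$, $\mathrm{PSR}_n(n-2)=\mathrm{StoRec}_n$.
   Context: $K_n^0$ is the complete graph on vertex set $\{0,1,\dots,n\}$ with sink $0$; every vertex has degree $n$. A configuration is $c\in\mathbb{Z}_{\ge0}^n$, stable if $c_i\le n-1$ for all $i$; $c^{\max}=(n-1,\dots,n-1)$. A deterministic toppling of an unstable vertex $i$ sends one grain to each neighbour (grains sent to the sink disappear). A stochastic toppling (parameter $p\in(0,1)$) of an unstable vertex $i$ sends, independently for each incident edge, one grain along it with probability $p$, else keeps it. For $k\in\{0,\dots,n\}$, the $k$-partial SSM on $K_n^0$ is the model in which vertices $1,\dots,k$ topple stochastically and vertices $k+1,\dots,n$ topple deterministically; its Markov chain on stable configurations adds a grain at vertex $i$ with probability $\mu_i>0$ and then stabilises. $\mathrm{PSR}_n(k)$ is its set of recurrent states; equivalently, the stable configurations reachable from $c^{\max}$ by a finite sequence of grain additions and topplings of unstable vertices in which vertices $k+1,\dots,n$ topple deterministically and vertices $1,\dots,k$ send one grain along each edge of an arbitrary subset of their incident edges. $\mathrm{StoRec}_n=\mathrm{PSR}_n(n)$ is the set of recurrent states of the SSM (all vertices topple stochastically). *)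

theory Defs
  imports Main
begin

text \<open>Configurations on the non-sink vertices 1..n of K_n^0 (vertex set {0,...,n}, sink 0),
  represented as functions nat => nat that are 0 outside {1..n}.\<close>

type_synonym config = "nat \<Rightarrow> nat"

definition cmax :: "nat \<Rightarrow> config" where
  "cmax n = (\<lambda>j. if j \<in> {1..n} then n - 1 else 0)"

definition stable :: "nat \<Rightarrow> config \<Rightarrow> bool" where
  "stable n c \<longleftrightarrow> (\<forall>i\<in>{1..n}. c i \<le> n - 1)"

definition add_grain :: "config \<Rightarrow> nat \<Rightarrow> config" where
  "add_grain c i = c(i := c i + 1)"

text \<open>Vertex i sends one grain along each edge {i,j} with j in S (S a subset of the
  neighbours {0..n} - {i}); grains sent to the sink 0 disappear.\<close>
definition send_along :: "nat \<Rightarrow> config \<Rightarrow> nat \<Rightarrow> nat set \<Rightarrow> config" where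
  "send_along n c i S =
     (\<lambda>j. if j = i then c i - card S
          else if j \<in> S \<inter> {1..n} then c j + 1 else c j)"

inductive psr_step :: "nat \<Rightarrow> nat \<Rightarrow> config \<Rightarrow> config \<Rightarrow> bool" for n k where
  add: "i \<in> {1..n} \<Longrightarrow> psr_step n k c (add_grain c i)"
| det: "i \<in> {k+1..n} \<Longrightarrow> c i \<ge> n \<Longrightarrow>
        psr_step n k c (send_along n c i ({0..n} - {i}))"
| sto: "i \<in> {1..k} \<Longrightarrow> c i \<ge> n \<Longrightarrow> S \<subseteq> {0..n} - {i} \<Longrightarrow>
        psr_step n k c (send_along n c i S)"

definition PSR :: "nat \<Rightarrow> nat \<Rightarrow> config set" where
  "PSR n k = {c. (psr_step n k)\<^sup>*\<^sup>* (cmax n) c \<and> stable n c}"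

definition StoRec :: "nat \<Rightarrow> config set" where
  "StoRec n = PSR n n"

end

theory Submission
  imports Defs
begin

text \<open>Every (n-2)-partial toppling is also a stochastic one, which gives one inclusion.
  Conversely, Landau's condition -- every set A of non-sink vertices holds at least
  card A choose 2 grains -- holds for c^max and is preserved by grain additions and by
  topplings, so every stochastically recurrent configuration satisfies it. By Landau's theorem
  such a configuration dominates the score vector (in-degrees) of a tournament on {1..n}. In
  the (n-2)-partial model every score vector is reachable from c^max: load the vertices
  1..n-2, let n-1 and n topple against each other, and then topple the stochastic vertices
  1..n-2 in increasing order, each sending grains to its out-neighbours, to the sink and to the
  still loaded vertices after it. Adding grains then reaches the configuration itself.\<close>

lemma psr_step_mono:
  assumes "k \<le> k'" and "psr_step n k c c'"
  shows "psr_step n k' c c'"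
  using assms(2)
proof cases
  case (add i)
  then show ?thesis by (simp add: psr_step.add)
next
  case (det i)
  then show ?thesis
    by (cases "i \<le> k'") (auto intro: psr_step.sto psr_step.det)
next
  case (sto i S)
  then show ?thesis using assms(1) by (auto intro: psr_step.sto)
qed

lemma PSR_mono: "k \<le> k' \<Longrightarrow> PSR n k \<subseteq> PSR n k'"
  unfolding PSR_def
  using rtranclp_mono[of "psr_step n k" "psr_step n k'"] psr_step_mono by blast

section \<open>Tournaments and Landau's theorem\<close>

text \<open>Twice the bound card A choose 2, to stay in nat.\<close>
definition landau_cond :: "'a set \<Rightarrow> ('a \<Rightarrow> nat) \<Rightarrow> bool" where
  "landau_cond V c \<longleftrightarrow> (\<forall>A \<subseteq> V. card A * (card A - 1) \<le> 2 * sum c A)"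

definition tournament :: "'a set \<Rightarrow> ('a \<Rightarrow> 'a \<Rightarrow> bool) \<Rightarrow> bool" where
  "tournament V R \<longleftrightarrow> (\<forall>u w. R u w \<longrightarrow> u \<in> V \<and> w \<in> V \<and> u \<noteq> w)
      \<and> (\<forall>u\<in>V. \<forall>w\<in>V. u \<noteq> w \<longrightarrow> R u w \<or> R w u) \<and> (\<forall>u w. R u w \<longrightarrow> \<not> R w u)"

definition indegree :: "'a set \<Rightarrow> ('a \<Rightarrow> 'a \<Rightarrow> bool) \<Rightarrow> 'a \<Rightarrow> nat" where
  "indegree V R x = card {w \<in> V. R w x}"

lemma indegree_insert:
  assumes "finite A" "u \<notin> A"
  shows "indegree (insert u A) R x = indegree A R x + (if R u x then 1 else 0)"
proof -
  have "{w \<in> insert u A. R w x} = (if R u x then insert u {w \<in> A. R w x} else {w \<in> A. R w x})"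
    by auto
  then show ?thesis
    using assms unfolding indegree_def by simp
qed

definition tournament_extend ::
    "('a \<Rightarrow> 'a \<Rightarrow> bool) \<Rightarrow> 'a set \<Rightarrow> 'a \<Rightarrow> 'a set \<Rightarrow> 'a \<Rightarrow> 'a \<Rightarrow> bool" where
  "tournament_extend R V v I x y \<longleftrightarrow> R x y \<or> (x \<in> I \<and> y = v) \<or> (x = v \<and> y \<in> V - I)"

lemma tournament_insert:
  assumes R: "tournament V R" and v: "v \<notin> V" and I: "I \<subseteq> V"
  shows "tournament (insert v V) (tournament_extend R V v I)"
  unfolding tournament_def
proof (intro conjI)
  show "\<forall>x y. tournament_extend R V v I x y \<longrightarrow> x \<in> insert v V \<and> y \<in> insert v V \<and> x \<noteq> y"
    using R v I unfolding tournament_extend_def tournament_def by auto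
  show "\<forall>x\<in>insert v V. \<forall>y\<in>insert v V. x \<noteq> y \<longrightarrow> tournament_extend R V v I x y \<or> tournament_extend R V v I y x"
    using R unfolding tournament_extend_def tournament_def by auto
  show "\<forall>x y. tournament_extend R V v I x y \<longrightarrow> \<not> tournament_extend R V v I y x"
    using R v I unfolding tournament_extend_def tournament_def by auto
qed

lemma indegree_tournament_extend_new:
  assumes R: "tournament V R" and v: "v \<notin> V" and I: "I \<subseteq> V"
  shows "indegree (insert v V) (tournament_extend R V v I) v = card I"
proof -
  have "{w \<in> insert v V. tournament_extend R V v I w v} = I"
    using R v I unfolding tournament_extend_def tournament_def by auto
  then show ?thesis
    unfolding indegree_def by simp
qed

lemma indegree_tournament_extend:
  assumes R: "tournament V R" and fin: "finite V" and v: "v \<notin> V" and x: "x \<in> V"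
  shows "indegree (insert v V) (tournament_extend R V v I) x
      = indegree V R x + (if x \<in> I then 0 else 1)"
proof -
  have "{w \<in> V. tournament_extend R V v I w x} = {w \<in> V. R w x}"
    using v x unfolding tournament_extend_def by auto
  then have "indegree V (tournament_extend R V v I) x = indegree V R x"
    unfolding indegree_def by simp
  then show ?thesis
    using indegree_insert[OF fin v] R x v unfolding tournament_extend_def tournament_def by auto
qed

lemma exists_lowest_subset:
  fixes c :: "'a \<Rightarrow> 'b::linorder"
  assumes fin: "finite V"
  shows "t \<le> card V \<Longrightarrow> \<exists>I \<subseteq> V. card I = t \<and> (\<forall>x\<in>I. \<forall>y\<in>V - I. c x \<le> c y)"
proof (induction t)
  case 0
  show ?case by (intro exI[of _ "{}"]) auto
next
  case (Suc t)
  then obtain I where I: "I \<subseteq> V" "card I = t" "\<forall>x\<in>I. \<forall>y\<in>V - I. c x \<le> c y"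
    by auto
  have "V - I \<noteq> {}"
    using I(1,2) Suc.prems by auto
  then obtain m where m: "m \<in> V - I" "\<forall>y\<in>V - I. c m \<le> c y"
    using arg_min_if_finite[of "V - I" c] fin by (meson finite_Diff not_less)
  have "card (insert m I) = Suc t"
    using I(1,2) m(1) fin by (simp add: finite_subset)
  moreover have "insert m I \<subseteq> V"
    using I(1) m(1) by blast
  moreover have "\<forall>x\<in>insert m I. \<forall>y\<in>V - insert m I. c x \<le> c y"
    using I(3) m(2) by blast
  ultimately show ?case
    by blast
qed

lemma arith_remove_min:
  fixes b t q r p M sBI sBD sIB :: nat
  assumes b: "b = q + r" and t: "t = r + p" and p: "1 \<le> p" and q: "1 \<le> q"
    and h1: "r * (r - 1) \<le> 2 * sBI" and h2: "q * M \<le> sBD" and h3: "sIB \<le> p * M"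
    and h4: "(b + p + 1) * (b + p) \<le> 2 * (t + (sBI + sBD + sIB))"
  shows "b * (b - 1) + 2 * q \<le> 2 * (sBI + sBD)"
proof (cases "2 * r + q + 1 \<le> 2 * M")
  case True
  have "b * (b - 1) + 2 * q = r * (r - 1) + q * (2 * r + q + 1)"
    using q unfolding b by (cases r) (simp_all add: algebra_simps)
  also have "\<dots> \<le> 2 * sBI + q * (2 * M)"
    using h1 True by (intro add_mono mult_left_mono) auto
  also have "\<dots> \<le> 2 * (sBI + sBD)"
    using h2 by simp
  finally show ?thesis .
next
  case False
  obtain p' q' where "p = Suc p'" "q = Suc q'"
    using p q by (metis Suc_le_D One_nat_def)
  then have "(b + p + 1) * (b + p) = b * (b - 1) + 2 * q + (2 * t + p * (2 * r + q)) + p * (p - 1) + p * q"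
    unfolding b t by (simp add: algebra_simps)
  then have "b * (b - 1) + 2 * q + (2 * t + p * (2 * r + q)) \<le> (b + p + 1) * (b + p)"
    by linarith
  also have "\<dots> \<le> 2 * t + 2 * (sBI + sBD) + 2 * sIB"
    using h4 by simp
  also have "\<dots> \<le> 2 * t + 2 * (sBI + sBD) + 2 * (p * M)"
    using h3 by simp
  also have "\<dots> \<le> 2 * t + 2 * (sBI + sBD) + p * (2 * r + q)"
    using False by (simp add: mult_left_mono)
  finally show ?thesis by linarith
qed

text \<open>Induction step of Landau's theorem: a vertex v of minimal score loses exactly to a set I
  of c v (or all) other vertices of lowest score and beats the rest. Deleting v and charging
  one point to each vertex it beats leaves a score function that again satisfies Landau's
  condition.\<close>
context
  fixes V :: "'a set" and c :: "'a \<Rightarrow> nat" and v :: 'a and I :: "'a set"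
  assumes fin: "finite V" and cond: "landau_cond V c"
    and v: "v \<in> V" and v_min: "\<forall>u\<in>V. c v \<le> c u"
    and I: "I \<subseteq> V - {v}" and card_I: "card I = min (c v) (card (V - {v}))"
    and I_lowest: "\<forall>x\<in>I. \<forall>y\<in>V - {v} - I. c x \<le> c y"
begin

lemma remove_min_positive:
  assumes x: "x \<in> V - {v}"
  shows "1 \<le> c x"
proof -
  have "{x, v} \<subseteq> V"
    using x v by blast
  then have "card {x, v} * (card {x, v} - 1) \<le> 2 * sum c {x, v}"
    using cond unfolding landau_cond_def by blast
  moreover have "c v \<le> c x"
    using x v_min by blast
  ultimately show ?thesis
    using x by simp
qed

text \<open>Here Landau's condition is applied to B \<union> I \<union> {v}, using that no vertex of I - B
  holds more grains than a vertex of B - I.\<close>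
lemma remove_min_bound_large:
  assumes B: "B \<subseteq> V - {v}" and BI: "B - I \<noteq> {}" and small: "card (B \<inter> I) < c v"
  shows "card B * (card B - 1) + 2 * card (B - I) \<le> 2 * sum c B"
proof -
  have finB: "finite B" and finI: "finite I"
    using B I fin finite_subset by blast+
  have "I \<noteq> V - {v}"
    using B BI by blast
  then have "card I < card (V - {v})"
    using I fin by (simp add: psubset_card_mono)
  then have card_I': "card I = c v"
    using card_I by simp
  define p where "p = card (I - B)"
  have cv: "c v = card (B \<inter> I) + p"
    using card_Int_Diff[OF finI, of B] card_I' unfolding p_def by (simp add: Int_commute)
  then have "1 \<le> p" using small by simp
  then have "I - B \<noteq> {}"
    unfolding p_def by (metis card.empty not_one_le_zero)
  define M where "M = Max (c ` (I - B))"
  have M_ge: "\<forall>x\<in>I - B. c x \<le> M" and M_le: "\<forall>y\<in>B - I. M \<le> c y"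
    using finI \<open>I - B \<noteq> {}\<close> I_lowest B unfolding M_def
    by (auto simp: Max_le_iff)
  have h1: "card (B \<inter> I) * (card (B \<inter> I) - 1) \<le> 2 * sum c (B \<inter> I)"
    using cond B unfolding landau_cond_def by blast
  have h2: "card (B - I) * M \<le> sum c (B - I)"
    using sum_bounded_below[of "B - I" M c] M_le by simp
  have h3: "sum c (I - B) \<le> p * M"
    using sum_bounded_above[of "I - B" c M] M_ge unfolding p_def by simp
  define X where "X = insert v (B \<union> I)"
  have "card (B \<union> I) = card B + p" and "sum c (B \<union> I) = sum c B + sum c (I - B)"
    using card_Un_disjoint[of B "I - B"] sum.union_disjoint[of B "I - B" c] finB finI
    unfolding p_def by auto
  moreover have "v \<notin> B \<union> I"
    using B I by blast
  ultimately have "card X = card B + p + 1" and "sum c X = c v + (sum c B + sum c (I - B))"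
    unfolding X_def using finB finI by simp_all
  moreover have "X \<subseteq> V"
    using B I v unfolding X_def by blast
  then have "card X * (card X - 1) \<le> 2 * sum c X"
    using cond unfolding landau_cond_def by blast
  ultimately have h4: "(card B + p + 1) * (card B + p) \<le> 2 * (c v + (sum c B + sum c (I - B)))"
    by simp
  have "card B = card (B - I) + card (B \<inter> I)"
    using card_Int_Diff[OF finB, of I] by simp
  moreover have "1 \<le> card (B - I)"
    using BI finB by (simp add: Suc_leI card_gt_0_iff)
  moreover have sumB: "sum c B = sum c (B \<inter> I) + sum c (B - I)"
    using finB by (rule sum.Int_Diff)
  ultimately show ?thesis
    using arith_remove_min[OF _ cv \<open>1 \<le> p\<close> _ h1 h2 h3] h4 by simp
qed

lemma remove_min_bound:
  assumes B: "B \<subseteq> V - {v}"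
  shows "card B * (card B - 1) + 2 * card (B - I) \<le> 2 * sum c B"
proof -
  have finB: "finite B"
    using B fin finite_subset by blast
  consider "B - I = {}" | "B - I \<noteq> {}" "c v \<le> card (B \<inter> I)" | "B - I \<noteq> {}" "card (B \<inter> I) < c v"
    by linarith
  then show ?thesis
  proof cases
    case 1
    have "B \<subseteq> V"
      using B by blast
    then have "card B * (card B - 1) \<le> 2 * sum c B"
      using cond unfolding landau_cond_def by blast
    then show ?thesis
      unfolding 1 by simp
  next
    case 2
    have "insert v B \<subseteq> V"
      using B v by blast
    then have "card (insert v B) * (card (insert v B) - 1) \<le> 2 * sum c (insert v B)"
      using cond unfolding landau_cond_def by blast
    moreover have "v \<notin> B"
      using B by blast
    ultimately have "Suc (card B) * card B \<le> 2 * (c v + sum c B)"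
      using finB by simp
    then have "card B * (card B - 1) + 2 * card B \<le> 2 * c v + 2 * sum c B"
      by (cases "card B") auto
    moreover have "card B = card (B \<inter> I) + card (B - I)"
      using finB by (rule card_Int_Diff)
    ultimately show ?thesis
      using 2(2) by linarith
  next
    case 3
    then show ?thesis
      using remove_min_bound_large B by blast
  qed
qed

lemma landau_cond_remove_min: "landau_cond (V - {v}) (\<lambda>u. if u \<in> I then c u else c u - 1)"
  unfolding landau_cond_def
proof (intro allI impI)
  fix B assume B: "B \<subseteq> V - {v}"
  let ?c' = "\<lambda>u. if u \<in> I then c u else c u - 1"
  have "finite B"
    using B fin finite_subset by blast
  have "sum c B = (\<Sum>u\<in>B. ?c' u + (if u \<in> I then 0 else 1))"
  proof (rule sum.cong[OF refl])
    fix u assume "u \<in> B"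
    then have "1 \<le> c u"
      using B remove_min_positive by blast
    then show "c u = ?c' u + (if u \<in> I then 0 else 1)"
      by simp
  qed
  also have "\<dots> = sum ?c' B + card (B - I)"
    using \<open>finite B\<close> by (simp add: sum.distrib sum.If_cases Diff_eq)
  finally show "card B * (card B - 1) \<le> 2 * sum ?c' B"
    using remove_min_bound[OF B] by linarith
qed

end

theorem landau_tournament:
  assumes "finite V" "landau_cond V c"
  shows "\<exists>R. tournament V R \<and> (\<forall>x\<in>V. indegree V R x \<le> c x)"
  using assms
proof (induction "card V" arbitrary: V c rule: less_induct)
  case less
  show ?case
  proof (cases "V = {}")
    case True
    then show ?thesis
      by (intro exI[of _ "\<lambda>_ _. False"]) (simp add: tournament_def)
  next
    case False
    obtain v where v: "v \<in> V" "\<forall>u\<in>V. c v \<le> c u"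
      using arg_min_if_finite[OF less.prems(1) False, of c] by (meson not_less)
    define V' where "V' = V - {v}"
    have V': "finite V'" "v \<notin> V'" "V = insert v V'" "card V' < card V"
      using less.prems(1) v(1) card_Diff1_less[OF less.prems(1) v(1)] unfolding V'_def by auto
    obtain I where I: "I \<subseteq> V'" "card I = min (c v) (card V')" "\<forall>x\<in>I. \<forall>y\<in>V' - I. c x \<le> c y"
      using exists_lowest_subset[OF V'(1), of "min (c v) (card V')" c] by auto
    define c' where "c' u = (if u \<in> I then c u else c u - 1)" for u
    have "landau_cond V' c'"
      using landau_cond_remove_min[OF less.prems v I[unfolded V'_def]]
      unfolding c'_def V'_def .
    then obtain R' where R': "tournament V' R'" "\<forall>x\<in>V'. indegree V' R' x \<le> c' x"
      using less.hyps[OF V'(4) V'(1)] by blast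
    define R where "R = tournament_extend R' V' v I"
    have "tournament V R"
      unfolding V'(3) R_def using R'(1) V'(2) I(1) by (rule tournament_insert)
    moreover have "indegree V R x \<le> c x" if x: "x \<in> V" for x
    proof (cases "x = v")
      case True
      then show ?thesis
        using indegree_tournament_extend_new[OF R'(1) V'(2) I(1)] I(2)
        unfolding V'(3) R_def by simp
    next
      case False
      then have "x \<in> V'" and "x \<in> V - {v}"
        using x V'(3) by auto
      have "indegree V R x = indegree V' R' x + (if x \<in> I then 0 else 1)"
        using indegree_tournament_extend[OF R'(1) V'(1,2) \<open>x \<in> V'\<close>]
        unfolding V'(3) R_def .
      moreover have "indegree V' R' x \<le> c' x"
        using R'(2) \<open>x \<in> V'\<close> by blast
      moreover have "1 \<le> c x"
        using remove_min_positive[OF less.prems v I[unfolded V'_def] \<open>x \<in> V - {v}\<close>] .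
      ultimately show ?thesis
        unfolding c'_def by (auto split: if_splits)
    qed
    ultimately show ?thesis
      by blast
  qed
qed

section \<open>Invariance of Landau's condition\<close>

definition is_config :: "nat \<Rightarrow> config \<Rightarrow> bool" where
  "is_config n c \<longleftrightarrow> (\<forall>j. j \<notin> {1..n} \<longrightarrow> c j = 0)"

lemma send_along_apply:
  "send_along n c i S j =
     (if j = i then c i - card S else if j \<in> S \<and> j \<in> {1..n} then c j + 1 else c j)"
  unfolding send_along_def by auto

lemma is_config_add_grain: "is_config n c \<Longrightarrow> i \<in> {1..n} \<Longrightarrow> is_config n (add_grain c i)"
  unfolding is_config_def add_grain_def by auto

lemma is_config_send_along: "is_config n c \<Longrightarrow> i \<in> {1..n} \<Longrightarrow> is_config n (send_along n c i S)"
  unfolding is_config_def by (auto simp: send_along_apply)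

lemma is_config_cmax: "is_config n (cmax n)"
  unfolding is_config_def cmax_def by simp

lemma landau_cond_mono:
  assumes "landau_cond V c" and "\<forall>j\<in>V. c j \<le> d j"
  shows "landau_cond V d"
  unfolding landau_cond_def
proof (intro allI impI)
  fix A assume "A \<subseteq> V"
  then have "card A * (card A - 1) \<le> 2 * sum c A" and "sum c A \<le> sum d A"
    using assms unfolding landau_cond_def by (auto intro!: sum_mono)
  then show "card A * (card A - 1) \<le> 2 * sum d A" by linarith
qed

lemma landau_cond_cmax: "landau_cond {1..n} (cmax n)"
  unfolding landau_cond_def
proof (intro allI impI)
  fix A :: "nat set" assume A: "A \<subseteq> {1..n}"
  then have "sum (cmax n) A = card A * (n - 1)"
    by (simp add: cmax_def subset_iff)
  moreover have "card A - 1 \<le> n - 1"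
    using card_mono[OF _ A] by simp
  ultimately show "card A * (card A - 1) \<le> 2 * sum (cmax n) A"
    by (metis mult_le_mono2 mult_2 le_add1 order_trans)
qed

lemma sum_send_along_off:
  assumes "finite A" "i \<notin> A" "A \<subseteq> {1..n}"
  shows "sum (send_along n c i S) A = sum c A + card (A \<inter> S)"
proof -
  have "sum (send_along n c i S) A = (\<Sum>j\<in>A. c j + (if j \<in> S then 1 else 0))"
    using assms by (intro sum.cong) (auto simp: send_along_apply)
  also have "\<dots> = sum c A + card (A \<inter> S)"
    using assms(1) by (simp add: sum.distrib sum.If_cases)
  finally show ?thesis .
qed

text \<open>If A contains i, then at most n - card (A - {i}) of the grains sent by i leave A, while
  i holds at least n grains: A keeps the card (A - {i}) extra grains its bound requires.\<close>
lemma landau_cond_send_along: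
  assumes cond: "landau_cond {1..n} c" and i: "i \<in> {1..n}" and ci: "n \<le> c i"
    and S: "S \<subseteq> {0..n} - {i}"
  shows "landau_cond {1..n} (send_along n c i S)"
  unfolding landau_cond_def
proof (intro allI impI)
  fix A assume A: "A \<subseteq> {1..n}"
  let ?c' = "send_along n c i S"
  have finA: "finite A" using A finite_subset by blast
  show "card A * (card A - 1) \<le> 2 * sum ?c' A"
  proof (cases "i \<in> A")
    case False
    then have "sum c A \<le> sum ?c' A"
      using finA A by (simp add: sum_send_along_off)
    moreover have "card A * (card A - 1) \<le> 2 * sum c A"
      using cond A unfolding landau_cond_def by blast
    ultimately show ?thesis by linarith
  next
    case True
    define A' where "A' = A - {i}"
    have A': "finite A'" "i \<notin> A'" "A' \<subseteq> {1..n}" using finA A unfolding A'_def by auto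
    have cardA: "card A = Suc (card A')"
      using True finA unfolding A'_def by (metis card_Suc_Diff1)
    have sumA: "sum ?c' A = (c i - card S) + sum c A' + card (A' \<inter> S)"
    proof -
      have "sum ?c' A = ?c' i + sum ?c' A'"
        using True finA unfolding A'_def by (simp add: sum.remove)
      then show ?thesis
        using sum_send_along_off[OF A'] by (simp add: send_along_apply)
    qed
    have condA': "card A' * (card A' - 1) \<le> 2 * sum c A'"
      using cond A'(3) unfolding landau_cond_def by blast
    have "card (A' \<union> S) \<le> card ({0..n} - {i})"
      using A' S by (intro card_mono) auto
    then have "card (A' \<union> S) \<le> n"
      using i by simp
    moreover have "card A' + card S = card (A' \<union> S) + card (A' \<inter> S)"
      using A'(1) S by (intro card_Un_Int) (auto intro: finite_subset)
    ultimately have "card A' + card S \<le> c i + card (A' \<inter> S)"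
      using ci by linarith
    moreover have "Suc (card A') * card A' = card A' * (card A' - 1) + 2 * card A'"
      by (cases "card A'") auto
    ultimately show ?thesis
      using condA' unfolding cardA sumA by simp
  qed
qed

lemma psr_step_preserves_landau_cond:
  assumes "psr_step n k c c'" "k \<le> n" "is_config n c" "landau_cond {1..n} c"
  shows "is_config n c' \<and> landau_cond {1..n} c'"
  using assms
proof (induction rule: psr_step.induct)
  case (add i c)
  have "\<forall>j\<in>{1..n}. c j \<le> add_grain c i j" unfolding add_grain_def by simp
  then show ?case using add is_config_add_grain landau_cond_mono by blast
next
  case (det i c)
  then show ?case using is_config_send_along landau_cond_send_along by simp
next
  case (sto i c S)
  then show ?case using is_config_send_along landau_cond_send_along by simp
qed

lemma reachable_landau_cond:
  assumes "(psr_step n k)\<^sup>*\<^sup>* (cmax n) c" "k \<le> n"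
  shows "is_config n c \<and> landau_cond {1..n} c"
  using assms(1)
proof (induction rule: rtranclp_induct)
  case base
  then show ?case using is_config_cmax landau_cond_cmax by blast
next
  case (step c c')
  then show ?case using psr_step_preserves_landau_cond assms(2) by blast
qed

section \<open>Reaching the score vector of a tournament\<close>

lemma reachable_add_grains:
  assumes "i \<in> {1..n}"
  shows "(psr_step n k)\<^sup>*\<^sup>* c (c(i := c i + m))"
proof (induction m)
  case 0
  then show ?case by simp
next
  case (Suc m)
  have "psr_step n k (c(i := c i + m)) (add_grain (c(i := c i + m)) i)"
    using assms by (rule psr_step.add)
  moreover have "add_grain (c(i := c i + m)) i = c(i := c i + Suc m)"
    unfolding add_grain_def by simp
  ultimately show ?case
    using Suc.IH by (metis rtranclp.rtrancl_into_rtrancl)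
qed

lemma reachable_above_on:
  assumes "finite A" "A \<subseteq> {1..n}" "\<forall>j\<in>A. c j \<le> d j" "\<forall>j. j \<notin> A \<longrightarrow> c j = d j"
  shows "(psr_step n k)\<^sup>*\<^sup>* c d"
  using assms
proof (induction A arbitrary: d rule: finite_induct)
  case empty
  then have "c = d" by auto
  then show ?case by simp
next
  case (insert x A)
  let ?d' = "d(x := c x)"
  have "(psr_step n k)\<^sup>*\<^sup>* c ?d'"
    using insert by (intro insert.IH) auto
  moreover have "d = ?d'(x := ?d' x + (d x - c x))"
    using insert.prems(2) by auto
  moreover have "x \<in> {1..n}"
    using insert.prems(1) by blast
  ultimately show ?case
    using reachable_add_grains[of x n k ?d' "d x - c x"] by (metis rtranclp_trans)
qed

lemma reachable_above:
  assumes "is_config n c" "is_config n d" "\<forall>j\<in>{1..n}. c j \<le> d j"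
  shows "(psr_step n k)\<^sup>*\<^sup>* c d"
  using assms unfolding is_config_def by (intro reachable_above_on[of "{1..n}"]) auto

lemma reachable_shed_to_sink:
  assumes u: "u \<in> {1..k}" and "n \<le> c u"
  shows "(psr_step n k)\<^sup>*\<^sup>* c (c(u := n))"
proof -
  have "(psr_step n k)\<^sup>*\<^sup>* c (c(u := n))" if "c u = n + m" for m c
    using that
  proof (induction m arbitrary: c)
    case 0
    then have "c(u := n) = c" by auto
    then show ?case by simp
  next
    case (Suc m)
    have "psr_step n k c (send_along n c u {0})"
      using u Suc.prems by (intro psr_step.sto) auto
    moreover have "send_along n c u {0} = c(u := n + m)"
      using Suc.prems by (auto simp: send_along_def)
    moreover have "(psr_step n k)\<^sup>*\<^sup>* (c(u := n + m)) ((c(u := n + m))(u := n))"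
      by (rule Suc.IH) simp
    ultimately show ?case
      unfolding fun_upd_upd by (metis converse_rtranclp_into_rtranclp)
  qed
  then show ?thesis
    using assms(2) by (metis le_add_diff_inverse)
qed

lemma reachable_loaded_config:
  assumes n: "3 \<le> n" and ab: "a \<in> {n - 1, n}" "b \<in> {n - 1, n}" "a \<noteq> b"
  shows "\<exists>P. (psr_step n (n - 2))\<^sup>*\<^sup>* (cmax n) P \<and> is_config n P
             \<and> (\<forall>x\<in>{1..n - 2}. n \<le> P x) \<and> P a = 1 \<and> P b = 0"
proof -
  \<comment> \<open>vertex 1 passes an added grain to a, then a and b topple, each feeding 1..n-2\<close>
  define c1 where "c1 = add_grain (cmax n) 1"
  define c2 where "c2 = send_along n c1 1 {0, a}"
  define c3 where "c3 = send_along n c2 a ({0..n} - {a})"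
  define c4 where "c4 = send_along n c3 b ({0..n} - {b})"
  have a: "a \<noteq> 1" "a \<in> {1..n}" "n - 2 < a" and b: "b \<noteq> 1" "b \<in> {1..n}" "n - 2 < b"
    using ab n by auto
  have c1: "c1 1 = n" "\<And>j. j \<noteq> 1 \<Longrightarrow> c1 j = cmax n j"
    unfolding c1_def add_grain_def cmax_def using n by auto
  have c2: "c2 a = n" "c2 b = n - 1" "\<forall>x\<in>{1..n - 2}. n - 2 \<le> c2 x"
    unfolding c2_def using n a b ab c1 by (auto simp: send_along_apply cmax_def)
  have c3: "c3 a = 0" "c3 b = n" "\<forall>x\<in>{1..n - 2}. n - 1 \<le> c3 x"
    unfolding c3_def using n a b ab c2 by (auto simp: send_along_apply)
  have c4: "c4 a = 1" "c4 b = 0" "\<forall>x\<in>{1..n - 2}. n \<le> c4 x"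
    unfolding c4_def using n a b ab c3 by (auto simp: send_along_apply)
  have "psr_step n (n - 2) (cmax n) c1"
    unfolding c1_def using n by (intro psr_step.add) auto
  moreover have "psr_step n (n - 2) c1 c2"
    unfolding c2_def using n a c1 by (intro psr_step.sto) auto
  moreover have "psr_step n (n - 2) c2 c3"
    unfolding c3_def using a c2 by (intro psr_step.det) auto
  moreover have "psr_step n (n - 2) c3 c4"
    unfolding c4_def using b c3 by (intro psr_step.det) auto
  ultimately have "(psr_step n (n - 2))\<^sup>*\<^sup>* (cmax n) c4"
    by (meson converse_rtranclp_into_rtranclp rtranclp.rtrancl_refl)
  moreover have "is_config n c4"
    unfolding c4_def c3_def c2_def c1_def using a b n
    by (intro is_config_send_along is_config_add_grain is_config_cmax) auto
  ultimately show ?thesis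
    using c4 by blast
qed

definition score_inv :: "nat \<Rightarrow> (nat \<Rightarrow> nat \<Rightarrow> bool) \<Rightarrow> nat \<Rightarrow> config \<Rightarrow> bool" where
  "score_inv n R u C \<longleftrightarrow> is_config n C \<and> (\<forall>x\<in>{u..n - 2}. n \<le> C x)
     \<and> (\<forall>x\<in>{1..n} - {u..n - 2}. C x = indegree ({1..n} - {u..n - 2}) R x)"

text \<open>The grains sent to the loaded vertices u+1, ..., n-2 are harmless, and they leave u with
  exactly its in-degree from the unloaded vertices.\<close>
definition score_send_set :: "nat \<Rightarrow> (nat \<Rightarrow> nat \<Rightarrow> bool) \<Rightarrow> nat \<Rightarrow> nat set" where
  "score_send_set n R u = insert 0 ({w \<in> {1..n}. R u w} \<union> {Suc u..n - 2})"

lemma card_score_send_set: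
  assumes R: "tournament {1..n} R" and u: "1 \<le> u" "u \<le> n - 2"
  shows "card (score_send_set n R u) + indegree ({1..n} - {Suc u..n - 2}) R u = n"
proof -
  define Out where "Out = {w \<in> {1..n}. R u w} \<union> {Suc u..n - 2}"
  define In where "In = {w \<in> {1..n} - {Suc u..n - 2}. R w u}"
  have "Out \<union> In = {1..n} - {u}"
  proof
    show "Out \<union> In \<subseteq> {1..n} - {u}"
      using R u unfolding Out_def In_def tournament_def by auto
    show "{1..n} - {u} \<subseteq> Out \<union> In"
    proof
      fix w assume w: "w \<in> {1..n} - {u}"
      then have "R u w \<or> R w u"
        using R u unfolding tournament_def by auto
      then show "w \<in> Out \<union> In"
        using w unfolding Out_def In_def by auto
    qed
  qed
  moreover have "Out \<inter> In = {}"
    using R unfolding Out_def In_def tournament_def by auto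
  ultimately have "card Out + card In = n - 1"
    using card_Un_disjoint[of Out In] u unfolding Out_def In_def by simp
  moreover have "card (score_send_set n R u) = Suc (card Out)"
    unfolding score_send_set_def Out_def by (simp add: finite_subset)
  ultimately show ?thesis
    using u unfolding In_def indegree_def by simp
qed

lemma score_inv_step:
  assumes R: "tournament {1..n} R" and u: "1 \<le> u" "u \<le> n - 2" and C: "score_inv n R u C"
  shows "\<exists>C'. (psr_step n (n - 2))\<^sup>*\<^sup>* C C' \<and> score_inv n R (Suc u) C'"
proof -
  let ?T = "score_send_set n R u"
  define C' where "C' = send_along n (C(u := n)) u ?T"
  have C_loaded: "\<forall>x\<in>{u..n - 2}. n \<le> C x"
    and C_done: "\<forall>x\<in>{1..n} - {u..n - 2}. C x = indegree ({1..n} - {u..n - 2}) R x"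
    using C unfolding score_inv_def by blast+
  have T: "?T \<subseteq> {0..n} - {u}"
    using R u unfolding score_send_set_def tournament_def by auto
  have "(psr_step n (n - 2))\<^sup>*\<^sup>* C (C(u := n))"
    using C_loaded u by (intro reachable_shed_to_sink) auto
  moreover have "psr_step n (n - 2) (C(u := n)) C'"
    unfolding C'_def using u T by (intro psr_step.sto) auto
  moreover have "is_config n C'"
    using C u unfolding C'_def score_inv_def is_config_def by (auto simp: send_along_apply)
  moreover have "n \<le> C' x" if x: "x \<in> {Suc u..n - 2}" for x
  proof -
    have "n \<le> C x"
      using C_loaded x by auto
    then show ?thesis
      using x unfolding C'_def score_send_set_def by (auto simp: send_along_apply)
  qed
  moreover have "C' x = indegree ({1..n} - {Suc u..n - 2}) R x"
    if x: "x \<in> {1..n} - {Suc u..n - 2}" for x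
  proof (cases "x = u")
    case True
    then show ?thesis
      using card_score_send_set[OF R u] unfolding C'_def by (simp add: send_along_apply)
  next
    case False
    then have x': "x \<in> {1..n} - {u..n - 2}"
      using x by auto
    have done_set: "{1..n} - {Suc u..n - 2} = insert u ({1..n} - {u..n - 2})"
      using u by auto
    have "indegree ({1..n} - {Suc u..n - 2}) R x
        = indegree ({1..n} - {u..n - 2}) R x + (if R u x then 1 else 0)"
      unfolding done_set using u by (intro indegree_insert) auto
    moreover have "x \<in> ?T \<longleftrightarrow> R u x"
      using x' unfolding score_send_set_def by auto
    moreover have "C x = indegree ({1..n} - {u..n - 2}) R x"
      using C_done x' by blast
    ultimately show ?thesis
      using x' False unfolding C'_def by (simp add: send_along_apply)
  qed
  ultimately show ?thesis
    unfolding score_inv_def by (blast intro: rtranclp.rtrancl_into_rtrancl)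
qed

lemma score_inv_run:
  assumes R: "tournament {1..n} R" and u: "1 \<le> u" "u \<le> n - 1" and C: "score_inv n R u C"
  shows "\<exists>C'. (psr_step n (n - 2))\<^sup>*\<^sup>* C C' \<and> score_inv n R (n - 1) C'"
  using u(2) C u(1)
proof (induction u arbitrary: C rule: inc_induct)
  case base
  then show ?case by blast
next
  case (step u)
  have "u \<le> n - 2"
    using step.hyps(2) by simp
  then obtain C1 where "(psr_step n (n - 2))\<^sup>*\<^sup>* C C1" "score_inv n R (Suc u) C1"
    using score_inv_step[OF R step.prems(2)] step.prems(1) by blast
  moreover obtain C' where "(psr_step n (n - 2))\<^sup>*\<^sup>* C1 C'" "score_inv n R (n - 1) C'"
    using step.IH[OF \<open>score_inv n R (Suc u) C1\<close>] by auto
  ultimately show ?case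
    by (blast intro: rtranclp_trans)
qed

lemma score_inv_initial:
  assumes n: "3 \<le> n" and R: "tournament {1..n} R"
  shows "\<exists>P. (psr_step n (n - 2))\<^sup>*\<^sup>* (cmax n) P \<and> score_inv n R 1 P"
proof -
  have "R (n - 1) n \<or> R n (n - 1)"
    using R n unfolding tournament_def by auto
  then obtain a b where ab: "{a, b} = {n - 1, n}" "a \<noteq> b" "R b a"
  proof (elim disjE)
    assume "R (n - 1) n"
    then show thesis
      using that[of n "n - 1"] n by (simp add: insert_commute)
  next
    assume "R n (n - 1)"
    then show thesis
      using that[of "n - 1" n] n by simp
  qed
  then obtain P where P: "(psr_step n (n - 2))\<^sup>*\<^sup>* (cmax n) P" "is_config n P"
      "\<forall>x\<in>{1..n - 2}. n \<le> P x" "P a = 1" "P b = 0"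
    using reachable_loaded_config[OF n, of a b] by blast
  have "{1..n} - {1..n - 2} = {n - 1, n}"
    using n by auto
  then have done_set: "{1..n} - {1..n - 2} = {a, b}"
    using ab(1) by simp
  have "\<not> R a a" "\<not> R b b" "\<not> R a b"
    using R ab(3) unfolding tournament_def by blast+
  then have "{w \<in> {a, b}. R w a} = {b}" "{w \<in> {a, b}. R w b} = {}"
    using ab(3) by auto
  then have "indegree {a, b} R a = 1" "indegree {a, b} R b = 0"
    unfolding indegree_def by simp_all
  then have "score_inv n R 1 P"
    unfolding score_inv_def done_set using P(2-5) by simp
  then show ?thesis
    using P(1) by blast
qed

theorem tournament_scores_reachable:
  assumes n: "3 \<le> n" and R: "tournament {1..n} R"
  shows "\<exists>C. (psr_step n (n - 2))\<^sup>*\<^sup>* (cmax n) C \<and> is_config n C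
             \<and> (\<forall>x\<in>{1..n}. C x = indegree {1..n} R x)"
proof -
  obtain P C where "(psr_step n (n - 2))\<^sup>*\<^sup>* (cmax n) P" "(psr_step n (n - 2))\<^sup>*\<^sup>* P C"
    and C: "score_inv n R (n - 1) C"
    using score_inv_initial[OF n R] score_inv_run[OF R, of 1] n by fastforce
  moreover have "{n - 1..n - 2} = {}"
    using n by simp
  ultimately show ?thesis
    unfolding score_inv_def by (auto intro: rtranclp_trans)
qed

theorem theorem5p6:
  fixes n :: nat
  assumes "n \<ge> 3"
  shows "PSR n (n - 2) = StoRec n"
proof
  show "PSR n (n - 2) \<subseteq> StoRec n"
    unfolding StoRec_def by (rule PSR_mono) simp
  show "StoRec n \<subseteq> PSR n (n - 2)"
  proof
    fix c assume "c \<in> StoRec n"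
    then have "(psr_step n n)\<^sup>*\<^sup>* (cmax n) c" and "stable n c"
      unfolding StoRec_def PSR_def by auto
    then have "is_config n c" "landau_cond {1..n} c"
      using reachable_landau_cond by auto
    then obtain R where R: "tournament {1..n} R" "\<forall>x\<in>{1..n}. indegree {1..n} R x \<le> c x"
      using landau_tournament[of "{1..n}" c] by auto
    then obtain C where C: "(psr_step n (n - 2))\<^sup>*\<^sup>* (cmax n) C" "is_config n C"
        "\<forall>x\<in>{1..n}. C x = indegree {1..n} R x"
      using tournament_scores_reachable assms by blast
    have "(psr_step n (n - 2))\<^sup>*\<^sup>* C c"
      using C(2,3) R(2) \<open>is_config n c\<close> by (intro reachable_above) auto
    then show "c \<in> PSR n (n - 2)"
      unfolding PSR_def using C(1) \<open>stable n c\<close> by (auto intro: rtranclp_trans)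
  qed
qed

end
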